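(* If a Markov category $\mathcal C$ is causal, then $\mathcal C$ is relatively positive.
   Context: A Markov category is a symmetric monoidal category $(\mathcal C,\otimes,I)$ with commutative comonoids $\mathrm{copy}_X\colon X\to X\otimes X$, $\mathrm{del}_X\colon X\to I$ compatible with $\otimes$, with $I$ terminal. For $m\colon\Theta\to A$ and $f,g\colon A\to Z$, $f$ and $g$ are $m$-almost surely equal if $(\mathrm{id}_A\otimes f)\circ\mathrm{copy}_A\circ m=(\mathrm{id}_A\otimes g)\circ\mathrm{copy}_A\circ m$. $\mathcal C$ is relatively positive if for all $p\colon\Theta\to X$, $f\colon X\to Y$, $g\colon Y\to Z$ such that $\mathrm{copy}_Z\circ g\circ f$ and $((g\circ f)\otimes(g\circ f))\circ\mathrm{copy}_X$ are $p$-almost surely equal, the morphisms $(\mathrm{id}_Y\otimes g)\circ\mathrm{copy}_Y\circ f$ and $(f\otimes(g\circ f))\circ\mathrm{copy}_X$ are $p$-almost surely equal. $\mathcal C$ is causal if for all $f\colon A\to W$, $g\colon W\to X$, $h_1,h_2\colon X\to Y$ with $(\mathrm{id}_X\otimes h_1)\circ\mathrm{copy}_X\circ g\circ f=(\mathrm{id}_X\otimes h_2)\circ\mathrm{copy}_X\circ g\circ f$, also $\big(\mathrm{id}_W\otimes((\mathrm{id}_X\otimes h_1)\circ\mathrm{copy}_X\circ g)\big)\circ\mathrm{copy}_W\circ f=\big(\mathrm{id}_W\otimes((\mathrm{id}_X\otimes h_2)\circ\mathrm{copy}_X\circ g)\big)\circ\mathrm{copy}_W\circ f$. *)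

theory Defs
  imports Main
begin

text \<open>A (not necessarily strict) symmetric monoidal category presented by its
structure maps. Objects have type 'o, morphisms type 'm; composition
comp C g f means g after f and is only constrained when cod f = dom g.\<close>

record ('o, 'm) mcat =
  mdom :: "'m \<Rightarrow> 'o"
  mcod :: "'m \<Rightarrow> 'o"
  comp :: "'m \<Rightarrow> 'm \<Rightarrow> 'm"
  mid :: "'o \<Rightarrow> 'm"
  otens :: "'o \<Rightarrow> 'o \<Rightarrow> 'o"
  mtens :: "'m \<Rightarrow> 'm \<Rightarrow> 'm"
  unit_ob :: "'o"
  assoc :: "'o \<Rightarrow> 'o \<Rightarrow> 'o \<Rightarrow> 'm"
  assoc_inv :: "'o \<Rightarrow> 'o \<Rightarrow> 'o \<Rightarrow> 'm"
  lunit :: "'o \<Rightarrow> 'm"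
  lunit_inv :: "'o \<Rightarrow> 'm"
  runit :: "'o \<Rightarrow> 'm"
  runit_inv :: "'o \<Rightarrow> 'm"
  swap :: "'o \<Rightarrow> 'o \<Rightarrow> 'm"
  copy :: "'o \<Rightarrow> 'm"
  del :: "'o \<Rightarrow> 'm"

definition hom :: "('o, 'm) mcat \<Rightarrow> 'm \<Rightarrow> 'o \<Rightarrow> 'o \<Rightarrow> bool" where
  "hom C f a b \<longleftrightarrow> mdom C f = a \<and> mcod C f = b"

text \<open>Middle-four interchange (a\<otimes>a)\<otimes>(b\<otimes>b) \<rightarrow> (a\<otimes>b)\<otimes>(a\<otimes>b).\<close>
definition middle4 :: "('o, 'm) mcat \<Rightarrow> 'o \<Rightarrow> 'o \<Rightarrow> 'm" where
  "middle4 C a b =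
     comp C (assoc_inv C a b (otens C a b))
      (comp C (mtens C (mid C a)
                 (comp C (assoc C b a b)
                    (comp C (mtens C (swap C a b) (mid C b)) (assoc_inv C a b b))))
         (assoc C a a (otens C b b)))"

locale markov_category =
  fixes C :: "('o, 'm) mcat" (structure)
  assumes id_hom: "hom C (mid C a) a a"
    and comp_hom: "hom C f a b \<Longrightarrow> hom C g b c \<Longrightarrow> hom C (comp C g f) a c"
    and id_left: "hom C f a b \<Longrightarrow> comp C (mid C b) f = f"
    and id_right: "hom C f a b \<Longrightarrow> comp C f (mid C a) = f"
    and comp_assoc: "hom C f a b \<Longrightarrow> hom C g b c \<Longrightarrow> hom C h c d \<Longrightarrow>
        comp C h (comp C g f) = comp C (comp C h g) f"
    and tens_hom: "hom C f a b \<Longrightarrow> hom C g c d \<Longrightarrow>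
        hom C (mtens C f g) (otens C a c) (otens C b d)"
    and tens_id: "mtens C (mid C a) (mid C b) = mid C (otens C a b)"
    and interchange: "hom C f a b \<Longrightarrow> hom C g b c \<Longrightarrow> hom C f' a' b' \<Longrightarrow> hom C g' b' c' \<Longrightarrow>
        mtens C (comp C g f) (comp C g' f') = comp C (mtens C g g') (mtens C f f')"
    and assoc_hom: "hom C (assoc C a b c) (otens C (otens C a b) c) (otens C a (otens C b c))"
    and assoc_inv_hom: "hom C (assoc_inv C a b c) (otens C a (otens C b c)) (otens C (otens C a b) c)"
    and assoc_inv1: "comp C (assoc_inv C a b c) (assoc C a b c) = mid C (otens C (otens C a b) c)"
    and assoc_inv2: "comp C (assoc C a b c) (assoc_inv C a b c) = mid C (otens C a (otens C b c))"
    and assoc_nat: "hom C f a a' \<Longrightarrow> hom C g b b' \<Longrightarrow> hom C h c c' \<Longrightarrow>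
        comp C (assoc C a' b' c') (mtens C (mtens C f g) h)
          = comp C (mtens C f (mtens C g h)) (assoc C a b c)"
    and lunit_hom: "hom C (lunit C a) (otens C (unit_ob C) a) a"
    and lunit_inv_hom: "hom C (lunit_inv C a) a (otens C (unit_ob C) a)"
    and lunit_inv1: "comp C (lunit_inv C a) (lunit C a) = mid C (otens C (unit_ob C) a)"
    and lunit_inv2: "comp C (lunit C a) (lunit_inv C a) = mid C a"
    and lunit_nat: "hom C f a b \<Longrightarrow>
        comp C (lunit C b) (mtens C (mid C (unit_ob C)) f) = comp C f (lunit C a)"
    and runit_hom: "hom C (runit C a) (otens C a (unit_ob C)) a"
    and runit_inv_hom: "hom C (runit_inv C a) a (otens C a (unit_ob C))"
    and runit_inv1: "comp C (runit_inv C a) (runit C a) = mid C (otens C a (unit_ob C))"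
    and runit_inv2: "comp C (runit C a) (runit_inv C a) = mid C a"
    and runit_nat: "hom C f a b \<Longrightarrow>
        comp C (runit C b) (mtens C f (mid C (unit_ob C))) = comp C f (runit C a)"
    and pentagon: "comp C (assoc C a b (otens C c d)) (assoc C (otens C a b) c d)
        = comp C (mtens C (mid C a) (assoc C b c d))
            (comp C (assoc C a (otens C b c) d) (mtens C (assoc C a b c) (mid C d)))"
    and triangle: "comp C (mtens C (mid C a) (lunit C b)) (assoc C a (unit_ob C) b)
        = mtens C (runit C a) (mid C b)"
    and swap_hom: "hom C (swap C a b) (otens C a b) (otens C b a)"
    and swap_nat: "hom C f a a' \<Longrightarrow> hom C g b b' \<Longrightarrow>
        comp C (swap C a' b') (mtens C f g) = comp C (mtens C g f) (swap C a b)"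
    and swap_sym: "comp C (swap C b a) (swap C a b) = mid C (otens C a b)"
    and hexagon: "comp C (assoc C b c a) (comp C (swap C a (otens C b c)) (assoc C a b c))
        = comp C (mtens C (mid C b) (swap C a c))
            (comp C (assoc C b a c) (mtens C (swap C a b) (mid C c)))"
    and copy_hom: "hom C (copy C a) a (otens C a a)"
    and del_hom: "hom C (del C a) a (unit_ob C)"
    and counit_left: "comp C (lunit C a) (comp C (mtens C (del C a) (mid C a)) (copy C a)) = mid C a"
    and counit_right: "comp C (runit C a) (comp C (mtens C (mid C a) (del C a)) (copy C a)) = mid C a"
    and coassoc: "comp C (assoc C a a a) (comp C (mtens C (copy C a) (mid C a)) (copy C a))
        = comp C (mtens C (mid C a) (copy C a)) (copy C a)"
    and cocomm: "comp C (swap C a a) (copy C a) = copy C a"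
    and copy_tens: "copy C (otens C a b) = comp C (middle4 C a b) (mtens C (copy C a) (copy C b))"
    and del_tens: "del C (otens C a b) = comp C (lunit C (unit_ob C)) (mtens C (del C a) (del C b))"
    and copy_unit: "copy C (unit_ob C) = lunit_inv C (unit_ob C)"
    and del_unit: "del C (unit_ob C) = mid C (unit_ob C)"
    and terminal: "hom C f a (unit_ob C) \<Longrightarrow> f = del C a"

definition as_eq :: "('o, 'm) mcat \<Rightarrow> 'm \<Rightarrow> 'm \<Rightarrow> 'm \<Rightarrow> bool" where
  "as_eq C m f g \<longleftrightarrow>
     comp C (mtens C (mid C (mcod C m)) f) (comp C (copy C (mcod C m)) m)
       = comp C (mtens C (mid C (mcod C m)) g) (comp C (copy C (mcod C m)) m)"

definition relatively_positive :: "('o, 'm) mcat \<Rightarrow> bool" where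
  "relatively_positive C \<longleftrightarrow>
     (\<forall>p f g T X Y Z. hom C p T X \<longrightarrow> hom C f X Y \<longrightarrow> hom C g Y Z \<longrightarrow>
        as_eq C p (comp C (copy C Z) (comp C g f))
                  (comp C (mtens C (comp C g f) (comp C g f)) (copy C X)) \<longrightarrow>
        as_eq C p (comp C (mtens C (mid C Y) g) (comp C (copy C Y) f))
                  (comp C (mtens C f (comp C g f)) (copy C X)))"

definition causal :: "('o, 'm) mcat \<Rightarrow> bool" where
  "causal C \<longleftrightarrow>
     (\<forall>f g h1 h2 A W X Y. hom C f A W \<longrightarrow> hom C g W X \<longrightarrow> hom C h1 X Y \<longrightarrow> hom C h2 X Y \<longrightarrow>
        comp C (mtens C (mid C X) h1) (comp C (copy C X) (comp C g f))
          = comp C (mtens C (mid C X) h2) (comp C (copy C X) (comp C g f)) \<longrightarrow>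
        comp C (mtens C (mid C W) (comp C (mtens C (mid C X) h1) (comp C (copy C X) g))) (comp C (copy C W) f)
          = comp C (mtens C (mid C W) (comp C (mtens C (mid C X) h2) (comp C (copy C X) g))) (comp C (copy C W) f))"

end

theory Submission
  imports Defs
begin

text \<open>
  Given \<open>p : \<Theta> \<rightarrow> X\<close>, \<open>f : X \<rightarrow> Y\<close> and \<open>g : Y \<rightarrow> Z\<close>, apply causality to the joint state
  \<open>q = (id \<otimes> f) \<circ> copy \<circ> p : \<Theta> \<rightarrow> X \<otimes> Y\<close>, the morphism \<open>id \<otimes> g : X \<otimes> Y \<rightarrow> X \<otimes> Z\<close> and the
  two tests \<open>h\<^sub>1 = \<pi>\<^sub>Z\<close> and \<open>h\<^sub>2 = (g \<circ> f) \<circ> \<pi>\<^sub>X\<close> on \<open>X \<otimes> Z\<close>.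
  By coassociativity and cocommutativity of copying, the two states that causality compares
  are, up to an associator, \<open>(id \<otimes> copy \<circ> g \<circ> f) \<circ> copy \<circ> p\<close> and
  \<open>(id \<otimes> (g \<circ> f \<otimes> g \<circ> f) \<circ> copy) \<circ> copy \<circ> p\<close>, which agree by hypothesis.
  Causality transports the equation back to \<open>X \<otimes> Y\<close>, and discarding the
  \<open>X \<otimes> Z\<close>-output there leaves, again up to an associator, the two sides of relative
  positivity.
\<close>

context markov_category
begin

abbreviation seq (infixr "\<cdot>" 55) where "g \<cdot> f \<equiv> comp C g f"
abbreviation par (infix "\<otimes>" 60) where "f \<otimes> g \<equiv> mtens C f g"
abbreviation par_ob (infix "\<odot>" 60) where "a \<odot> b \<equiv> otens C a b"
abbreviation "\<I> \<equiv> unit_ob C"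
abbreviation "\<iota> \<equiv> mid C"
abbreviation "\<alpha> \<equiv> assoc C"
abbreviation "\<alpha>' \<equiv> assoc_inv C"
abbreviation "\<l> \<equiv> lunit C"
abbreviation "\<l>' \<equiv> lunit_inv C"
abbreviation "\<r> \<equiv> runit C"
abbreviation "\<r>' \<equiv> runit_inv C"
abbreviation "\<sigma> \<equiv> swap C"
abbreviation "\<Delta> \<equiv> copy C"
abbreviation "\<epsilon> \<equiv> del C"

abbreviation proj_fst :: "'o \<Rightarrow> 'o \<Rightarrow> 'm" where
  "proj_fst a b \<equiv> \<r> a \<cdot> (\<iota> a \<otimes> \<epsilon> b)"
abbreviation proj_snd :: "'o \<Rightarrow> 'o \<Rightarrow> 'm" where
  "proj_snd a b \<equiv> \<l> b \<cdot> (\<epsilon> a \<otimes> \<iota> b)"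

lemma dom_cod_simps [simp]:
  "mdom C (\<iota> a) = a" "mcod C (\<iota> a) = a"
  "mdom C (\<alpha> a b c) = (a \<odot> b) \<odot> c" "mcod C (\<alpha> a b c) = a \<odot> (b \<odot> c)"
  "mdom C (\<alpha>' a b c) = a \<odot> (b \<odot> c)" "mcod C (\<alpha>' a b c) = (a \<odot> b) \<odot> c"
  "mdom C (\<l> a) = \<I> \<odot> a" "mcod C (\<l> a) = a"
  "mdom C (\<l>' a) = a" "mcod C (\<l>' a) = \<I> \<odot> a"
  "mdom C (\<r> a) = a \<odot> \<I>" "mcod C (\<r> a) = a"
  "mdom C (\<r>' a) = a" "mcod C (\<r>' a) = a \<odot> \<I>"
  "mdom C (\<sigma> a b) = a \<odot> b" "mcod C (\<sigma> a b) = b \<odot> a"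
  "mdom C (\<Delta> a) = a" "mcod C (\<Delta> a) = a \<odot> a"
  "mdom C (\<epsilon> a) = a" "mcod C (\<epsilon> a) = \<I>"
  "mdom C (f \<otimes> g) = mdom C f \<odot> mdom C g" "mcod C (f \<otimes> g) = mcod C f \<odot> mcod C g"
  using id_hom assoc_hom assoc_inv_hom lunit_hom lunit_inv_hom runit_hom runit_inv_hom swap_hom
    copy_hom del_hom tens_hom[of f "mdom C f" "mcod C f" g "mdom C g" "mcod C g"]
  by (auto simp: hom_def)

lemma dom_cod_comp [simp]:
  "mcod C f = mdom C g \<Longrightarrow> mdom C (g \<cdot> f) = mdom C f"
  "mcod C f = mdom C g \<Longrightarrow> mcod C (g \<cdot> f) = mcod C g"
  using comp_hom[of f "mdom C f" "mcod C f" g "mcod C g"] by (auto simp: hom_def)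

lemma comp_assoc_right [simp]:
  "mcod C f = mdom C g \<Longrightarrow> mcod C g = mdom C h \<Longrightarrow> (h \<cdot> g) \<cdot> f = h \<cdot> (g \<cdot> f)"
  using comp_assoc[of f "mdom C f" "mdom C g" g "mdom C h" h "mcod C h"] by (simp add: hom_def)

lemma comp_id_left [simp]: "mcod C f = b \<Longrightarrow> \<iota> b \<cdot> f = f"
  using id_left[of f "mdom C f" b] by (simp add: hom_def)

lemma comp_id_right [simp]: "mdom C f = a \<Longrightarrow> f \<cdot> \<iota> a = f"
  using id_right[of f a "mcod C f"] by (simp add: hom_def)

declare tens_id [simp]

text \<open>
  Equations are proved by rewriting right-associated chains of composites with
  \<open>simp only\<close>, discharging domain and codomain conditions by \<open>chain_simps\<close>.
  Hence most rewrite rules also come precomposed with an arbitrary \<open>r\<close>, so that they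
  apply inside such a chain.
\<close>

lemmas chain_simps = dom_cod_simps dom_cod_comp comp_assoc_right

lemma comp_eq_precomp:
  "g \<cdot> f = h \<Longrightarrow> mcod C f = mdom C g \<Longrightarrow> mcod C r = mdom C f \<Longrightarrow> g \<cdot> (f \<cdot> r) = h \<cdot> r"
  by (metis comp_assoc_right)

lemma tens_comp:
  "mcod C f = mdom C g \<Longrightarrow> mcod C f' = mdom C g' \<Longrightarrow>
   (g \<otimes> g') \<cdot> (f \<otimes> f') = (g \<cdot> f) \<otimes> (g' \<cdot> f')"
  using interchange[of f "mdom C f" "mdom C g" g "mcod C g"
      f' "mdom C f'" "mdom C g'" g' "mcod C g'"]
  by (simp add: hom_def)

lemma tens_comp_precomp:
  "mcod C f = mdom C g \<Longrightarrow> mcod C f' = mdom C g' \<Longrightarrow> mcod C r = mdom C f \<odot> mdom C f' \<Longrightarrow>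
   (g \<otimes> g') \<cdot> ((f \<otimes> f') \<cdot> r) = ((g \<cdot> f) \<otimes> (g' \<cdot> f')) \<cdot> r"
  by (subst comp_eq_precomp[OF tens_comp]) simp_all

declare assoc_inv1 [simp] assoc_inv2 [simp] lunit_inv1 [simp] lunit_inv2 [simp]
  runit_inv1 [simp] runit_inv2 [simp]

lemma inverse_cancel_precomp [simp]:
  "mcod C r = (a \<odot> b) \<odot> c \<Longrightarrow> \<alpha>' a b c \<cdot> (\<alpha> a b c \<cdot> r) = r"
  "mcod C r = a \<odot> (b \<odot> c) \<Longrightarrow> \<alpha> a b c \<cdot> (\<alpha>' a b c \<cdot> r) = r"
  "mcod C r = \<I> \<odot> a \<Longrightarrow> \<l>' a \<cdot> (\<l> a \<cdot> r) = r"
  "mcod C r = a \<Longrightarrow> \<l> a \<cdot> (\<l>' a \<cdot> r) = r"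
  "mcod C r = a \<odot> \<I> \<Longrightarrow> \<r>' a \<cdot> (\<r> a \<cdot> r) = r"
  "mcod C r = a \<Longrightarrow> \<r> a \<cdot> (\<r>' a \<cdot> r) = r"
  by (subst comp_assoc_right[symmetric]; simp)+

lemma assoc_natural:
  "\<alpha> (mcod C f) (mcod C g) (mcod C h) \<cdot> ((f \<otimes> g) \<otimes> h)
     = (f \<otimes> (g \<otimes> h)) \<cdot> \<alpha> (mdom C f) (mdom C g) (mdom C h)"
  using assoc_nat[of f "mdom C f" "mcod C f" g "mdom C g" "mcod C g" h "mdom C h" "mcod C h"]
  by (simp add: hom_def)

lemma assoc_natural_pre:
  "mcod C f = a \<Longrightarrow> mcod C g = b \<Longrightarrow> mcod C h = c \<Longrightarrow>
   mcod C r = (mdom C f \<odot> mdom C g) \<odot> mdom C h \<Longrightarrow>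
   \<alpha> a b c \<cdot> (((f \<otimes> g) \<otimes> h) \<cdot> r) = (f \<otimes> (g \<otimes> h)) \<cdot> (\<alpha> (mdom C f) (mdom C g) (mdom C h) \<cdot> r)"
  using comp_eq_precomp[where r = r, OF assoc_natural[of f g h]] by simp

lemma assoc_natural_rev_pre:
  "mdom C f = a \<Longrightarrow> mdom C g = b \<Longrightarrow> mdom C h = c \<Longrightarrow> mcod C r = (a \<odot> b) \<odot> c \<Longrightarrow>
   (f \<otimes> (g \<otimes> h)) \<cdot> (\<alpha> a b c \<cdot> r) = \<alpha> (mcod C f) (mcod C g) (mcod C h) \<cdot> (((f \<otimes> g) \<otimes> h) \<cdot> r)"
  using comp_eq_precomp[where r = r, OF assoc_natural[of f g h, symmetric]] by simp

lemma assoc_natural_rev_id: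
  "mdom C f = a \<Longrightarrow> (f \<otimes> \<iota> (b \<odot> c)) \<cdot> \<alpha> a b c = \<alpha> (mcod C f) b c \<cdot> ((f \<otimes> \<iota> b) \<otimes> \<iota> c)"
  using assoc_natural[of f "\<iota> b" "\<iota> c"] by simp

lemma assoc_inv_natural:
  "\<alpha>' (mcod C f) (mcod C g) (mcod C h) \<cdot> (f \<otimes> (g \<otimes> h))
     = ((f \<otimes> g) \<otimes> h) \<cdot> \<alpha>' (mdom C f) (mdom C g) (mdom C h)"
proof -
  let ?a = "\<alpha> (mdom C f) (mdom C g) (mdom C h)" and ?a' = "\<alpha>' (mdom C f) (mdom C g) (mdom C h)"
  have "\<alpha>' (mcod C f) (mcod C g) (mcod C h) \<cdot> (f \<otimes> (g \<otimes> h))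
      = \<alpha>' (mcod C f) (mcod C g) (mcod C h) \<cdot> ((f \<otimes> (g \<otimes> h)) \<cdot> (?a \<cdot> ?a'))"
    by simp
  also have "\<dots> = \<alpha>' (mcod C f) (mcod C g) (mcod C h) \<cdot>
      (\<alpha> (mcod C f) (mcod C g) (mcod C h) \<cdot> ((f \<otimes> g) \<otimes> h) \<cdot> ?a')"
    by (simp only: comp_eq_precomp[OF assoc_natural[symmetric]] chain_simps)
  also have "\<dots> = ((f \<otimes> g) \<otimes> h) \<cdot> ?a'"
    by simp
  finally show ?thesis .
qed

lemma assoc_inv_natural_rev:
  "mdom C f = a \<Longrightarrow> mdom C g = b \<Longrightarrow> mdom C h = c \<Longrightarrow>
   ((f \<otimes> g) \<otimes> h) \<cdot> \<alpha>' a b c = \<alpha>' (mcod C f) (mcod C g) (mcod C h) \<cdot> (f \<otimes> (g \<otimes> h))"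
  using assoc_inv_natural by metis

lemma assoc_inv_natural_rev_id_pre:
  "mdom C h = c \<Longrightarrow> mcod C r = a \<odot> (b \<odot> c) \<Longrightarrow>
   (\<iota> (a \<odot> b) \<otimes> h) \<cdot> (\<alpha>' a b c \<cdot> r) = \<alpha>' a b (mcod C h) \<cdot> ((\<iota> a \<otimes> (\<iota> b \<otimes> h)) \<cdot> r)"
  using comp_eq_precomp[where r = r, OF assoc_inv_natural_rev[of "\<iota> a" a "\<iota> b" b h c]] by simp

lemma swap_natural:
  "mcod C f = a \<Longrightarrow> mcod C g = b \<Longrightarrow> \<sigma> a b \<cdot> (f \<otimes> g) = (g \<otimes> f) \<cdot> \<sigma> (mdom C f) (mdom C g)"
  using swap_nat[of f "mdom C f" "mcod C f" g "mdom C g" "mcod C g"] by (simp add: hom_def)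

lemma swap_natural_pre:
  "mcod C f = a \<Longrightarrow> mcod C g = b \<Longrightarrow> mcod C r = mdom C f \<odot> mdom C g \<Longrightarrow>
   \<sigma> a b \<cdot> ((f \<otimes> g) \<cdot> r) = (g \<otimes> f) \<cdot> (\<sigma> (mdom C f) (mdom C g) \<cdot> r)"
  using comp_eq_precomp[where r = r, OF swap_natural[of f a g b]] by simp

lemma swap_natural_rev:
  "mdom C f = a \<Longrightarrow> mdom C g = b \<Longrightarrow> (g \<otimes> f) \<cdot> \<sigma> a b = \<sigma> (mcod C f) (mcod C g) \<cdot> (f \<otimes> g)"
  using swap_natural by metis

lemma lunit_natural_pre:
  "mcod C f = a \<Longrightarrow> mcod C r = \<I> \<odot> mdom C f \<Longrightarrow>
   \<l> a \<cdot> ((\<iota> \<I> \<otimes> f) \<cdot> r) = f \<cdot> (\<l> (mdom C f) \<cdot> r)"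
  using lunit_nat[of f "mdom C f" a]
    comp_eq_precomp[of "\<l> a" "\<iota> \<I> \<otimes> f" "f \<cdot> \<l> (mdom C f)" r]
  by (simp add: hom_def)

lemma lunit_natural_rev_pre:
  "mdom C f = a \<Longrightarrow> mcod C r = \<I> \<odot> a \<Longrightarrow>
   f \<cdot> (\<l> a \<cdot> r) = \<l> (mcod C f) \<cdot> ((\<iota> \<I> \<otimes> f) \<cdot> r)"
  using lunit_natural_pre[of f "mcod C f" r] by simp

lemma runit_natural_pre:
  "mcod C f = a \<Longrightarrow> mcod C r = mdom C f \<odot> \<I> \<Longrightarrow>
   \<r> a \<cdot> ((f \<otimes> \<iota> \<I>) \<cdot> r) = f \<cdot> (\<r> (mdom C f) \<cdot> r)"
  using runit_nat[of f "mdom C f" a]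
    comp_eq_precomp[of "\<r> a" "f \<otimes> \<iota> \<I>" "f \<cdot> \<r> (mdom C f)" r]
  by (simp add: hom_def)

lemma assoc_cancel_left:
  "\<alpha> a b c \<cdot> f = \<alpha> a b c \<cdot> g \<Longrightarrow>
   mcod C f = (a \<odot> b) \<odot> c \<Longrightarrow> mcod C g = (a \<odot> b) \<odot> c \<Longrightarrow> f = g"
  by (metis inverse_cancel_precomp(1))

lemma assoc_inv_cancel_left:
  "\<alpha>' a b c \<cdot> f = \<alpha>' a b c \<cdot> g \<Longrightarrow>
   mcod C f = a \<odot> (b \<odot> c) \<Longrightarrow> mcod C g = a \<odot> (b \<odot> c) \<Longrightarrow> f = g"
  by (metis inverse_cancel_precomp(2))

lemma tens_unit_right_cancel:
  assumes "k \<otimes> \<iota> \<I> = k' \<otimes> \<iota> \<I>" and "mdom C k = mdom C k'" and "mcod C k = mcod C k'"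
  shows "k = k'"
proof -
  have conj: "k = \<r> (mcod C k) \<cdot> ((k \<otimes> \<iota> \<I>) \<cdot> \<r>' (mdom C k))" for k
    by (simp only: runit_natural_pre chain_simps) simp
  show ?thesis
    using conj[of k] conj[of k'] assms by metis
qed

lemma tens_unit_left_cancel:
  assumes "\<iota> \<I> \<otimes> k = \<iota> \<I> \<otimes> k'" and "mdom C k = mdom C k'" and "mcod C k = mcod C k'"
  shows "k = k'"
proof -
  have conj: "k = \<l> (mcod C k) \<cdot> ((\<iota> \<I> \<otimes> k) \<cdot> \<l>' (mdom C k))" for k
    by (simp only: lunit_natural_pre chain_simps) simp
  show ?thesis
    using conj[of k] conj[of k'] assms by metis
qed

lemma del_comp [simp]: "mcod C f = a \<Longrightarrow> \<epsilon> a \<cdot> f = \<epsilon> (mdom C f)"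
  using terminal[of "\<epsilon> a \<cdot> f" "mdom C f"] by (simp add: hom_def)

lemma del_tens_id_copy: "(\<epsilon> a \<otimes> \<iota> a) \<cdot> \<Delta> a = \<l>' a"
proof -
  have "(\<epsilon> a \<otimes> \<iota> a) \<cdot> \<Delta> a = \<l>' a \<cdot> (\<l> a \<cdot> ((\<epsilon> a \<otimes> \<iota> a) \<cdot> \<Delta> a))"
    by simp
  also have "\<dots> = \<l>' a"
    using counit_left[of a] by simp
  finally show ?thesis .
qed

lemma id_tens_del_copy: "(\<iota> a \<otimes> \<epsilon> a) \<cdot> \<Delta> a = \<r>' a"
proof -
  have "(\<iota> a \<otimes> \<epsilon> a) \<cdot> \<Delta> a = \<r>' a \<cdot> (\<r> a \<cdot> ((\<iota> a \<otimes> \<epsilon> a) \<cdot> \<Delta> a))"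
    by simp
  also have "\<dots> = \<r>' a"
    using counit_right[of a] by simp
  finally show ?thesis .
qed

lemma coassoc_precomp:
  assumes "mcod C r = a"
  shows "\<alpha> a a a \<cdot> ((\<Delta> a \<otimes> \<iota> a) \<cdot> (\<Delta> a \<cdot> r)) = (\<iota> a \<otimes> \<Delta> a) \<cdot> (\<Delta> a \<cdot> r)"
proof -
  have "(\<alpha> a a a \<cdot> ((\<Delta> a \<otimes> \<iota> a) \<cdot> \<Delta> a)) \<cdot> r = ((\<iota> a \<otimes> \<Delta> a) \<cdot> \<Delta> a) \<cdot> r"
    by (simp only: coassoc)
  then show ?thesis
    by (simp only: chain_simps assms)
qed

lemma discard_fst_copy:
  assumes "mdom C h = a" "mcod C h = b" "mcod C r = a"
  shows "\<l> b \<cdot> ((\<epsilon> a \<otimes> h) \<cdot> (\<Delta> a \<cdot> r)) = h \<cdot> r"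
proof -
  have "\<l> b \<cdot> ((\<epsilon> a \<otimes> h) \<cdot> (\<Delta> a \<cdot> r))
      = \<l> b \<cdot> ((\<iota> \<I> \<otimes> h) \<cdot> ((\<epsilon> a \<otimes> \<iota> a) \<cdot> (\<Delta> a \<cdot> r)))"
    by (simp only: tens_comp_precomp comp_id_left comp_id_right chain_simps assms)
  also have "\<dots> = h \<cdot> (\<l> a \<cdot> ((\<epsilon> a \<otimes> \<iota> a) \<cdot> (\<Delta> a \<cdot> r)))"
    by (simp only: lunit_natural_pre chain_simps assms)
  also have "\<dots> = h \<cdot> r"
    by (simp only: del_tens_id_copy[THEN comp_eq_precomp] inverse_cancel_precomp chain_simps assms)
  finally show ?thesis .
qed

text \<open>
  In a symmetric monoidal category this follows from the hexagon axiom; here the counit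
  laws and cocommutativity give it directly.
\<close>

lemma runit_swap: "\<r> b \<cdot> \<sigma> \<I> b = \<l> b"
proof -
  have "\<r> b \<cdot> \<sigma> \<I> b = \<r> b \<cdot> (\<sigma> \<I> b \<cdot> (\<l>' b \<cdot> \<l> b))" by simp
  also have "\<dots> = \<r> b \<cdot> (\<sigma> \<I> b \<cdot> ((\<epsilon> b \<otimes> \<iota> b) \<cdot> (\<Delta> b \<cdot> \<l> b)))"
    by (simp only: del_tens_id_copy[symmetric] chain_simps)
  also have "\<dots> = \<r> b \<cdot> ((\<iota> b \<otimes> \<epsilon> b) \<cdot> (\<sigma> b b \<cdot> (\<Delta> b \<cdot> \<l> b)))"
    by (simp only: swap_natural_pre chain_simps)
  also have "\<dots> = \<r> b \<cdot> ((\<iota> b \<otimes> \<epsilon> b) \<cdot> (\<Delta> b \<cdot> \<l> b))"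
    by (simp only: cocomm[THEN comp_eq_precomp] chain_simps)
  also have "\<dots> = \<l> b"
    by (simp only: id_tens_del_copy[THEN comp_eq_precomp] chain_simps) simp
  finally show ?thesis .
qed

text \<open>
  Kelly's coherence lemmas: they follow from the pentagon and triangle axioms since
  tensoring with the unit object is faithful.
\<close>

lemma runit_tensor: "(\<iota> a \<otimes> \<r> b) \<cdot> \<alpha> a b \<I> = \<r> (a \<odot> b)"
proof -
  let ?K = "(\<iota> a \<otimes> \<r> b) \<cdot> \<alpha> a b \<I>"
  let ?P = "(\<iota> a \<otimes> \<alpha> b \<I> \<I>) \<cdot> (\<alpha> a (b \<odot> \<I>) \<I> \<cdot> (\<alpha> a b \<I> \<otimes> \<iota> \<I>))"
  have pentagon': "\<alpha> a b (\<I> \<odot> \<I>) \<cdot> \<alpha> (a \<odot> b) \<I> \<I> = ?P"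
    using pentagon by simp
  have "(\<iota> a \<otimes> (\<iota> b \<otimes> \<l> \<I>)) \<cdot> (\<alpha> a b (\<I> \<odot> \<I>) \<cdot> \<alpha> (a \<odot> b) \<I> \<I>)
      = \<alpha> a b \<I> \<cdot> (\<r> (a \<odot> b) \<otimes> \<iota> \<I>)"
    by (simp only: assoc_natural_rev_pre tens_id triangle chain_simps)
  moreover have "(\<iota> a \<otimes> (\<iota> b \<otimes> \<l> \<I>)) \<cdot> ?P = \<alpha> a b \<I> \<cdot> (?K \<otimes> \<iota> \<I>)"
    by (simp only: tens_comp_precomp comp_id_left triangle assoc_natural_rev_pre tens_comp
        chain_simps)
  ultimately have "\<alpha> a b \<I> \<cdot> (\<r> (a \<odot> b) \<otimes> \<iota> \<I>) = \<alpha> a b \<I> \<cdot> (?K \<otimes> \<iota> \<I>)"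
    unfolding pentagon' by simp
  then have "\<r> (a \<odot> b) \<otimes> \<iota> \<I> = ?K \<otimes> \<iota> \<I>"
    by (rule assoc_cancel_left) simp_all
  then show ?thesis
    by (rule tens_unit_right_cancel[symmetric]) simp_all
qed

lemma lunit_tensor: "\<l> (b \<odot> c) \<cdot> \<alpha> \<I> b c = \<l> b \<otimes> \<iota> c"
proof -
  let ?K = "\<l> (b \<odot> c) \<cdot> \<alpha> \<I> b c"
  let ?Q = "\<alpha> \<I> (\<I> \<odot> b) c \<cdot> (\<alpha> \<I> \<I> b \<otimes> \<iota> c)"
  and ?Q' = "(\<alpha>' \<I> \<I> b \<otimes> \<iota> c) \<cdot> \<alpha>' \<I> (\<I> \<odot> b) c"
  have pentagon': "\<alpha> \<I> \<I> (b \<odot> c) \<cdot> \<alpha> (\<I> \<odot> \<I>) b c = (\<iota> \<I> \<otimes> \<alpha> \<I> b c) \<cdot> ?Q"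
    using pentagon by simp
  have "(\<iota> \<I> \<otimes> \<l> (b \<odot> c)) \<cdot> (\<alpha> \<I> \<I> (b \<odot> c) \<cdot> \<alpha> (\<I> \<odot> \<I>) b c)
      = (\<iota> \<I> \<otimes> (\<l> b \<otimes> \<iota> c)) \<cdot> ?Q"
    by (simp only: triangle[THEN comp_eq_precomp] assoc_natural_rev_id assoc_natural_rev_pre
        tens_comp_precomp tens_comp triangle comp_id_left chain_simps)
  moreover have "(\<iota> \<I> \<otimes> \<l> (b \<odot> c)) \<cdot> ((\<iota> \<I> \<otimes> \<alpha> \<I> b c) \<cdot> ?Q) = (\<iota> \<I> \<otimes> ?K) \<cdot> ?Q"
    by (simp only: tens_comp_precomp comp_id_left chain_simps)
  ultimately have "((\<iota> \<I> \<otimes> (\<l> b \<otimes> \<iota> c)) \<cdot> ?Q) \<cdot> ?Q' = ((\<iota> \<I> \<otimes> ?K) \<cdot> ?Q) \<cdot> ?Q'"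
    unfolding pentagon' by simp
  then have "\<iota> \<I> \<otimes> (\<l> b \<otimes> \<iota> c) = \<iota> \<I> \<otimes> ?K"
    by (simp add: tens_comp_precomp)
  then show ?thesis
    by (rule tens_unit_left_cancel[symmetric]) simp_all
qed

lemma runit_tensor': "\<r> (a \<odot> b) \<cdot> \<alpha>' a b \<I> = \<iota> a \<otimes> \<r> b"
  by (simp add: runit_tensor[symmetric])

lemma lunit_tensor': "(\<l> b \<otimes> \<iota> c) \<cdot> \<alpha>' \<I> b c = \<l> (b \<odot> c)"
  by (simp add: lunit_tensor[symmetric])

text \<open>
  Expanding the copy of \<open>a \<otimes> b\<close> by the middle-four interchange, the discarded copy
  turns into a unitor, which the lemmas above absorb.
\<close>

lemma proj_snd_copy_tens:
  "(\<iota> (a \<odot> b) \<otimes> proj_snd a b) \<cdot> \<Delta> (a \<odot> b) = \<alpha>' a b b \<cdot> (\<iota> a \<otimes> \<Delta> b)"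
proof -
  let ?copies = "\<alpha> a a (b \<odot> b) \<cdot> (\<Delta> a \<otimes> \<Delta> b)"
  let ?unit = "\<iota> (a \<odot> b) \<otimes> \<l> b"
  have "(\<iota> (a \<odot> b) \<otimes> proj_snd a b) \<cdot> \<Delta> (a \<odot> b)
      = ?unit \<cdot> ((\<iota> (a \<odot> b) \<otimes> (\<epsilon> a \<otimes> \<iota> b)) \<cdot> (\<alpha>' a b (a \<odot> b) \<cdot>
          ((\<iota> a \<otimes> (\<alpha> b a b \<cdot> ((\<sigma> a b \<otimes> \<iota> b) \<cdot> \<alpha>' a b b))) \<cdot> ?copies)))"
    by (simp only: copy_tens middle4_def tens_comp_precomp tens_comp comp_id_left chain_simps)
  also have "\<dots> = ?unit \<cdot> (\<alpha>' a b (\<I> \<odot> b) \<cdot>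
      ((\<iota> a \<otimes> (\<alpha> b \<I> b \<cdot> (((\<iota> b \<otimes> \<epsilon> a) \<otimes> \<iota> b) \<cdot> ((\<sigma> a b \<otimes> \<iota> b) \<cdot> \<alpha>' a b b)))) \<cdot> ?copies))"
    by (simp only: assoc_inv_natural_rev_id_pre tens_comp_precomp comp_id_left
        assoc_natural_rev_pre chain_simps)
  also have "\<dots> = ?unit \<cdot> (\<alpha>' a b (\<I> \<odot> b) \<cdot>
      ((\<iota> a \<otimes> (\<alpha> b \<I> b \<cdot> ((\<sigma> \<I> b \<otimes> \<iota> b) \<cdot> (((\<epsilon> a \<otimes> \<iota> b) \<otimes> \<iota> b) \<cdot> \<alpha>' a b b)))) \<cdot> ?copies))"
    by (simp only: tens_comp_precomp tens_comp comp_id_left swap_natural_rev chain_simps)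
  also have "\<dots> = ?unit \<cdot> (\<alpha>' a b (\<I> \<odot> b) \<cdot>
      ((\<iota> a \<otimes> (\<alpha> b \<I> b \<cdot> ((\<sigma> \<I> b \<otimes> \<iota> b) \<cdot> \<alpha>' \<I> b b))) \<cdot>
        ((\<iota> a \<otimes> (\<epsilon> a \<otimes> (\<iota> b \<otimes> \<iota> b))) \<cdot> ?copies)))"
    by (simp only: assoc_inv_natural_rev tens_comp_precomp tens_comp comp_id_left chain_simps)
  also have "\<dots> = ?unit \<cdot> (\<alpha>' a b (\<I> \<odot> b) \<cdot>
      ((\<iota> a \<otimes> (\<alpha> b \<I> b \<cdot> ((\<sigma> \<I> b \<otimes> \<iota> b) \<cdot> \<alpha>' \<I> b b))) \<cdot>
        (\<alpha> a \<I> (b \<odot> b) \<cdot> (\<r>' a \<otimes> \<Delta> b))))"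
    by (simp only: assoc_natural_rev_pre tens_comp id_tens_del_copy tens_id comp_id_left chain_simps)
  also have "\<dots> = \<alpha>' a b b \<cdot> ((\<iota> a \<otimes> \<l> (b \<odot> b)) \<cdot> (\<alpha> a \<I> (b \<odot> b) \<cdot> (\<r>' a \<otimes> \<Delta> b)))"
    by (simp only: assoc_inv_natural_rev_id_pre tens_comp_precomp triangle[THEN comp_eq_precomp]
        tens_comp runit_swap comp_id_left lunit_tensor' chain_simps)
  also have "\<dots> = \<alpha>' a b b \<cdot> (\<iota> a \<otimes> \<Delta> b)"
    by (simp only: triangle[THEN comp_eq_precomp] tens_comp runit_inv2 comp_id_left chain_simps)
  finally show ?thesis .
qed

lemma proj_fst_copy_tens:
  "(\<iota> (a \<odot> b) \<otimes> proj_fst a b) \<cdot> \<Delta> (a \<odot> b)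
     = \<alpha>' a b a \<cdot> ((\<iota> a \<otimes> \<sigma> a b) \<cdot> (\<alpha> a a b \<cdot> (\<Delta> a \<otimes> \<iota> b)))"
proof -
  let ?copies = "\<alpha> a a (b \<odot> b) \<cdot> (\<Delta> a \<otimes> \<Delta> b)"
  let ?unit = "\<iota> (a \<odot> b) \<otimes> \<r> a"
  have "(\<iota> (a \<odot> b) \<otimes> proj_fst a b) \<cdot> \<Delta> (a \<odot> b)
      = ?unit \<cdot> ((\<iota> (a \<odot> b) \<otimes> (\<iota> a \<otimes> \<epsilon> b)) \<cdot> (\<alpha>' a b (a \<odot> b) \<cdot>
          ((\<iota> a \<otimes> (\<alpha> b a b \<cdot> ((\<sigma> a b \<otimes> \<iota> b) \<cdot> \<alpha>' a b b))) \<cdot> ?copies)))"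
    by (simp only: copy_tens middle4_def tens_comp_precomp tens_comp comp_id_left chain_simps)
  also have "\<dots> = ?unit \<cdot> (\<alpha>' a b (a \<odot> \<I>) \<cdot>
      ((\<iota> a \<otimes> (\<alpha> b a \<I> \<cdot> (((\<iota> b \<otimes> \<iota> a) \<otimes> \<epsilon> b) \<cdot> ((\<sigma> a b \<otimes> \<iota> b) \<cdot> \<alpha>' a b b)))) \<cdot> ?copies))"
    by (simp only: assoc_inv_natural_rev_id_pre tens_comp_precomp comp_id_left
        assoc_natural_rev_pre chain_simps)
  also have "\<dots> = ?unit \<cdot> (\<alpha>' a b (a \<odot> \<I>) \<cdot>
      ((\<iota> a \<otimes> (\<alpha> b a \<I> \<cdot> ((\<sigma> a b \<otimes> \<iota> \<I>) \<cdot> (((\<iota> a \<otimes> \<iota> b) \<otimes> \<epsilon> b) \<cdot> \<alpha>' a b b)))) \<cdot> ?copies))"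
    by (simp only: tens_comp_precomp tens_comp comp_id_left comp_id_right tens_id chain_simps)
  also have "\<dots> = ?unit \<cdot> (\<alpha>' a b (a \<odot> \<I>) \<cdot>
      ((\<iota> a \<otimes> (\<alpha> b a \<I> \<cdot> ((\<sigma> a b \<otimes> \<iota> \<I>) \<cdot> \<alpha>' a b \<I>))) \<cdot>
        ((\<iota> a \<otimes> (\<iota> a \<otimes> (\<iota> b \<otimes> \<epsilon> b))) \<cdot> ?copies)))"
    by (simp only: assoc_inv_natural_rev tens_comp_precomp tens_comp comp_id_left chain_simps)
  also have "\<dots> = ?unit \<cdot> (\<alpha>' a b (a \<odot> \<I>) \<cdot>
      ((\<iota> a \<otimes> (\<alpha> b a \<I> \<cdot> ((\<sigma> a b \<otimes> \<iota> \<I>) \<cdot> \<alpha>' a b \<I>))) \<cdot>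
        (\<alpha> a a (b \<odot> \<I>) \<cdot> (\<Delta> a \<otimes> \<r>' b))))"
    by (simp only: assoc_natural_rev_pre tens_comp id_tens_del_copy tens_id comp_id_left chain_simps)
  also have "\<dots> = \<alpha>' a b a \<cdot> ((\<iota> a \<otimes> \<sigma> a b) \<cdot>
      ((\<iota> a \<otimes> (\<iota> a \<otimes> \<r> b)) \<cdot> (\<alpha> a a (b \<odot> \<I>) \<cdot> (\<Delta> a \<otimes> \<r>' b))))"
    by (simp only: assoc_inv_natural_rev_id_pre tens_comp_precomp runit_tensor[THEN comp_eq_precomp]
        runit_natural_pre runit_tensor' comp_id_left chain_simps)
  also have "\<dots> = \<alpha>' a b a \<cdot> ((\<iota> a \<otimes> \<sigma> a b) \<cdot> (\<alpha> a a b \<cdot> (\<Delta> a \<otimes> \<iota> b)))"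
    by (simp only: assoc_natural_rev_pre tens_comp_precomp tens_comp tens_id comp_id_left runit_inv2
        chain_simps)
  finally show ?thesis .
qed

lemma copy_then_proj_snd:
  assumes "mcod C s = a \<odot> v" "mdom C k = v" "mcod C k = b" "mdom C h = b" "mcod C h = w"
  shows "(\<iota> (a \<odot> b) \<otimes> (h \<cdot> proj_snd a b)) \<cdot> (\<Delta> (a \<odot> b) \<cdot> ((\<iota> a \<otimes> k) \<cdot> s))
       = \<alpha>' a b w \<cdot> ((\<iota> a \<otimes> ((\<iota> b \<otimes> h) \<cdot> (\<Delta> b \<cdot> k))) \<cdot> s)"
proof -
  have "(\<iota> (a \<odot> b) \<otimes> (h \<cdot> proj_snd a b)) \<cdot> (\<Delta> (a \<odot> b) \<cdot> ((\<iota> a \<otimes> k) \<cdot> s))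
      = (\<iota> (a \<odot> b) \<otimes> h) \<cdot> ((\<iota> (a \<odot> b) \<otimes> proj_snd a b) \<cdot> (\<Delta> (a \<odot> b) \<cdot> ((\<iota> a \<otimes> k) \<cdot> s)))"
    by (simp only: tens_comp_precomp comp_id_left chain_simps assms)
  also have "\<dots> = (\<iota> (a \<odot> b) \<otimes> h) \<cdot> (\<alpha>' a b b \<cdot> ((\<iota> a \<otimes> \<Delta> b) \<cdot> ((\<iota> a \<otimes> k) \<cdot> s)))"
    by (simp only: proj_snd_copy_tens[THEN comp_eq_precomp] chain_simps assms)
  also have "\<dots> = \<alpha>' a b w \<cdot> ((\<iota> a \<otimes> ((\<iota> b \<otimes> h) \<cdot> (\<Delta> b \<cdot> k))) \<cdot> s)"
    by (simp only: assoc_inv_natural_rev_id_pre tens_comp_precomp comp_id_left chain_simps assms)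
  finally show ?thesis .
qed

lemma copy_then_proj_fst:
  assumes "mcod C p = a" "mdom C k = a" "mcod C k = b" "mdom C h = a" "mcod C h = w"
  shows "(\<iota> (a \<odot> b) \<otimes> (h \<cdot> proj_fst a b)) \<cdot> (\<Delta> (a \<odot> b) \<cdot> ((\<iota> a \<otimes> k) \<cdot> (\<Delta> a \<cdot> p)))
       = \<alpha>' a b w \<cdot> ((\<iota> a \<otimes> ((k \<otimes> h) \<cdot> \<Delta> a)) \<cdot> (\<Delta> a \<cdot> p))"
proof -
  have "(\<iota> (a \<odot> b) \<otimes> (h \<cdot> proj_fst a b)) \<cdot> (\<Delta> (a \<odot> b) \<cdot> ((\<iota> a \<otimes> k) \<cdot> (\<Delta> a \<cdot> p)))
      = (\<iota> (a \<odot> b) \<otimes> h) \<cdot> ((\<iota> (a \<odot> b) \<otimes> proj_fst a b) \<cdot> (\<Delta> (a \<odot> b) \<cdot> ((\<iota> a \<otimes> k) \<cdot> (\<Delta> a \<cdot> p))))"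
    by (simp only: tens_comp_precomp comp_id_left chain_simps assms)
  also have "\<dots> = (\<iota> (a \<odot> b) \<otimes> h) \<cdot> (\<alpha>' a b a \<cdot> ((\<iota> a \<otimes> \<sigma> a b) \<cdot>
      (\<alpha> a a b \<cdot> ((\<Delta> a \<otimes> \<iota> b) \<cdot> ((\<iota> a \<otimes> k) \<cdot> (\<Delta> a \<cdot> p))))))"
    by (simp only: proj_fst_copy_tens[THEN comp_eq_precomp] chain_simps assms)
  also have "\<dots> = (\<iota> (a \<odot> b) \<otimes> h) \<cdot> (\<alpha>' a b a \<cdot> ((\<iota> a \<otimes> \<sigma> a b) \<cdot>
      (\<alpha> a a b \<cdot> (((\<iota> a \<otimes> \<iota> a) \<otimes> k) \<cdot> ((\<Delta> a \<otimes> \<iota> a) \<cdot> (\<Delta> a \<cdot> p))))))"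
    by (simp only: tens_comp_precomp tens_comp comp_id_left comp_id_right tens_id chain_simps assms)
  also have "\<dots> = (\<iota> (a \<odot> b) \<otimes> h) \<cdot> (\<alpha>' a b a \<cdot> ((\<iota> a \<otimes> \<sigma> a b) \<cdot>
      ((\<iota> a \<otimes> (\<iota> a \<otimes> k)) \<cdot> ((\<iota> a \<otimes> \<Delta> a) \<cdot> (\<Delta> a \<cdot> p)))))"
    by (simp only: assoc_natural_pre coassoc_precomp chain_simps assms)
  also have "\<dots> = \<alpha>' a b w \<cdot> ((\<iota> a \<otimes> (\<iota> b \<otimes> h)) \<cdot> ((\<iota> a \<otimes> \<sigma> a b) \<cdot>
      ((\<iota> a \<otimes> (\<iota> a \<otimes> k)) \<cdot> ((\<iota> a \<otimes> \<Delta> a) \<cdot> (\<Delta> a \<cdot> p)))))"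
    by (simp only: assoc_inv_natural_rev_id_pre chain_simps assms)
  also have "\<dots> = \<alpha>' a b w \<cdot> ((\<iota> a \<otimes> ((k \<otimes> h) \<cdot> \<Delta> a)) \<cdot> (\<Delta> a \<cdot> p))"
    by (simp only: tens_comp_precomp tens_comp comp_id_left comp_id_right swap_natural_pre
        swap_natural cocomm chain_simps assms)
  finally show ?thesis .
qed

lemma eq_if_graph_eq:
  assumes graph_eq: "(\<iota> a \<otimes> ((\<iota> b \<otimes> h) \<cdot> (\<Delta> b \<cdot> t))) \<cdot> s
                    = (\<iota> a \<otimes> ((\<iota> b \<otimes> h') \<cdot> (\<Delta> b \<cdot> t))) \<cdot> s"
    and "mdom C h = b" "mcod C h = w" "mdom C h' = b" "mcod C h' = w"
    and "mcod C t = b" "mcod C s = a \<odot> mdom C t"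
  shows "(\<iota> a \<otimes> (h \<cdot> t)) \<cdot> s = (\<iota> a \<otimes> (h' \<cdot> t)) \<cdot> s"
proof -
  have marginal: "(\<iota> a \<otimes> proj_snd b w) \<cdot> ((\<iota> a \<otimes> ((\<iota> b \<otimes> k) \<cdot> (\<Delta> b \<cdot> t))) \<cdot> s)
      = (\<iota> a \<otimes> (k \<cdot> t)) \<cdot> s"
    if "mdom C k = b" "mcod C k = w" for k
    by (simp only: tens_comp_precomp tens_comp discard_fst_copy comp_id_left comp_id_right
        chain_simps assms that)
  show ?thesis
    using marginal[of h] marginal[of h'] graph_eq assms by metis
qed

lemma relatively_positive_of_causal:
  assumes "causal C"
    and p: "hom C p T X" and f: "hom C f X Y" and g: "hom C g Y Z"
    and hyp: "(\<iota> X \<otimes> (\<Delta> Z \<cdot> (g \<cdot> f))) \<cdot> (\<Delta> X \<cdot> p)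
              = (\<iota> X \<otimes> (((g \<cdot> f) \<otimes> (g \<cdot> f)) \<cdot> \<Delta> X)) \<cdot> (\<Delta> X \<cdot> p)"
  shows "(\<iota> X \<otimes> ((\<iota> Y \<otimes> g) \<cdot> (\<Delta> Y \<cdot> f))) \<cdot> (\<Delta> X \<cdot> p)
         = (\<iota> X \<otimes> ((f \<otimes> (g \<cdot> f)) \<cdot> \<Delta> X)) \<cdot> (\<Delta> X \<cdot> p)"
proof -
  have D [simp]: "mdom C p = T" "mcod C p = X" "mdom C f = X" "mcod C f = Y"
    "mdom C g = Y" "mcod C g = Z"
    using p f g by (auto simp: hom_def)
  let ?q = "(\<iota> X \<otimes> f) \<cdot> (\<Delta> X \<cdot> p)"
  let ?h1 = "proj_snd X Z" and ?h2 = "(g \<cdot> f) \<cdot> proj_fst X Z"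
  have gq: "(\<iota> X \<otimes> g) \<cdot> ?q = (\<iota> X \<otimes> (g \<cdot> f)) \<cdot> (\<Delta> X \<cdot> p)"
    by (simp only: tens_comp_precomp comp_id_left chain_simps D)
  have "(\<iota> (X \<odot> Z) \<otimes> ?h1) \<cdot> (\<Delta> (X \<odot> Z) \<cdot> ((\<iota> X \<otimes> g) \<cdot> ?q))
      = (\<iota> (X \<odot> Z) \<otimes> ?h2) \<cdot> (\<Delta> (X \<odot> Z) \<cdot> ((\<iota> X \<otimes> g) \<cdot> ?q))"
    using copy_then_proj_snd[of "\<Delta> X \<cdot> p" X X "g \<cdot> f" Z "\<iota> Z" Z]
      copy_then_proj_fst[of p X "g \<cdot> f" Z "g \<cdot> f" Z] hyp
    unfolding gq by simp
  moreover have "hom C ?q T (X \<odot> Y)" "hom C (\<iota> X \<otimes> g) (X \<odot> Y) (X \<odot> Z)"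
    "hom C ?h1 (X \<odot> Z) Z" "hom C ?h2 (X \<odot> Z) Z"
    by (simp_all add: hom_def)
  ultimately have
    "(\<iota> (X \<odot> Y) \<otimes> ((\<iota> (X \<odot> Z) \<otimes> ?h1) \<cdot> (\<Delta> (X \<odot> Z) \<cdot> (\<iota> X \<otimes> g)))) \<cdot> (\<Delta> (X \<odot> Y) \<cdot> ?q)
   = (\<iota> (X \<odot> Y) \<otimes> ((\<iota> (X \<odot> Z) \<otimes> ?h2) \<cdot> (\<Delta> (X \<odot> Z) \<cdot> (\<iota> X \<otimes> g)))) \<cdot> (\<Delta> (X \<odot> Y) \<cdot> ?q)"
    using \<open>causal C\<close> unfolding causal_def by blast
  then have "(\<iota> (X \<odot> Y) \<otimes> (?h1 \<cdot> (\<iota> X \<otimes> g))) \<cdot> (\<Delta> (X \<odot> Y) \<cdot> ?q)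
      = (\<iota> (X \<odot> Y) \<otimes> (?h2 \<cdot> (\<iota> X \<otimes> g))) \<cdot> (\<Delta> (X \<odot> Y) \<cdot> ?q)"
    by (rule eq_if_graph_eq) simp_all
  moreover have "?h1 \<cdot> (\<iota> X \<otimes> g) = g \<cdot> proj_snd X Y"
    by (simp only: tens_comp lunit_natural_rev_pre comp_id_left comp_id_right chain_simps D)
  moreover have "?h2 \<cdot> (\<iota> X \<otimes> g) = (g \<cdot> f) \<cdot> proj_fst X Y"
    by (simp only: tens_comp del_comp comp_id_left chain_simps D)
  ultimately have "\<alpha>' X Y Z \<cdot> ((\<iota> X \<otimes> ((\<iota> Y \<otimes> g) \<cdot> (\<Delta> Y \<cdot> f))) \<cdot> (\<Delta> X \<cdot> p))
      = \<alpha>' X Y Z \<cdot> ((\<iota> X \<otimes> ((f \<otimes> (g \<cdot> f)) \<cdot> \<Delta> X)) \<cdot> (\<Delta> X \<cdot> p))"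
    using copy_then_proj_snd[of "\<Delta> X \<cdot> p" X X f Y g Z]
      copy_then_proj_fst[of p X f Y "g \<cdot> f" Z] by simp
  then show ?thesis
    by (rule assoc_inv_cancel_left) simp_all
qed

end

theorem corollary2p28:
  fixes C :: "('o, 'm) mcat"
  assumes "markov_category C" and "causal C"
  shows "relatively_positive C"
proof -
  interpret markov_category C by fact
  show ?thesis
    unfolding relatively_positive_def
  proof (intro allI impI)
    fix p f g T X Y Z
    assume typing: "hom C p T X" "hom C f X Y" "hom C g Y Z"
      and "as_eq C p (comp C (copy C Z) (comp C g f))
             (comp C (mtens C (comp C g f) (comp C g f)) (copy C X))"
    then show "as_eq C p (comp C (mtens C (mid C Y) g) (comp C (copy C Y) f))
             (comp C (mtens C f (comp C g f)) (copy C X))"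
      using relatively_positive_of_causal[OF \<open>causal C\<close> typing]
      by (simp add: as_eq_def hom_def)
  qed
qed

end
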